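(* Every voting rule in the EJR-Exact family satisfies EJR: for every ballot profile $\mathcal{A}$ over $C$, every $k\le|C|$, and every choice of the subprocedures Alg1, Alg2, Alg3 (and every resolution of their choices), the output committee $W$ provides EJR for $(\mathcal{A},k)$.
   Context: Setting: voters $N=\{1,\dots,n\}$, candidates $C=\{c_1,\dots,c_m\}$, approval ballots $A_i\subseteq C$, $\mathcal{A}=(A_1,\dots,A_n)$, $k$ a positive integer with $k\le|C|$, $q=n/k$, $N_c=\{i: c\in A_i\}$, $n_c=|N_c|$. Convention: $\max\emptyset=0$. EJR: for $\ell\in\{1,\dots,k\}$, $N^*\subseteq N$ is $\ell$-cohesive if $|N^*|\ge\ell n/k$ and $|\bigcap_{i\in N^*}A_i|\ge\ell$. A committee $W$, $|W|=k$, provides EJR if for every $\ell$ and every $\ell$-cohesive $N^*$ some $i\in N^*$ has $|A_i\cap W|\ge\ell$. Dissatisfaction level: for $W\subseteq C$ with $|W|\le k$ and $c\in C\setminus W$, $\ell(c,W)$ is the largest nonnegative integer $\ell$ with $\ell=\lfloor \frac{k}{n}|\{i\in N: c\in A_i,\ |A_i\cap W|<\ell\}|\rfloor$. Along a run with current sets $W_j$, write $\ell_j(c)=\ell(c,W_j)$, and for $c\in C\setminus W_j$, $i\in N_c$: $\ell_j(i,c)=\max_{c'\in A_i\setminus(W_j\cup\{c\})}\ell_j(c')$, and $g_i^j(c)=0$ if $\ell_j(i,c)\le|A_i\cap W_j|$, $g_i^j(c)=\frac{\ell_j(i,c)-|A_i\cap W_j|-1}{\ell_j(i,c)}$ otherwise.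 EJR-Exact family (parametrized by arbitrary subprocedures Alg1, Alg2, Alg3): set $W_0=\emptyset$, $f_i^0=1$ for all $i$. For $j=1,\dots,k$: for each $c\in C\setminus W_{j-1}$ compute $x_c=\sum_{i\in N_c}(f_i^{j-1}-g_i^{j-1}(c))$. If some $c$ has $x_c\ge q$ (Stage 1, "normal iteration"): Alg1 selects any such $w_j$; set $f_i^j=f_i^{j-1}$ for $i\notin N_{w_j}$; Alg2 chooses values $f_i^j$ for $i\in N_{w_j}$ with $0\le f_i^j\le f_i^{j-1}$, $\sum_{i\in N_{w_j}}(f_i^{j-1}-f_i^j)=q$, and $f_i^j\ge g_i^{j-1}(w_j)$ for every $i\in N_{w_j}$ with $\ell_{j-1}(i,w_j)>|A_i\cap W_{j-1}|$; set $W_j=W_{j-1}\cup\{w_j\}$. Otherwise stop the loop. Finally, if fewer than $k$ candidates have been selected (Stage 2), Alg3 adds arbitrary further candidates from $C$ not yet selected until $k$ are selected. The output $W$ is the set of all selected candidates. *)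

theory Defs
  imports Main Complex_Main
begin

definition supporters :: "'v set \<Rightarrow> ('v \<Rightarrow> 'c set) \<Rightarrow> 'c \<Rightarrow> 'v set" where
  "supporters N A c = {i \<in> N. c \<in> A i}"

definition cohesive :: "'v set \<Rightarrow> ('v \<Rightarrow> 'c set) \<Rightarrow> nat \<Rightarrow> nat \<Rightarrow> 'v set \<Rightarrow> bool" where
  "cohesive N A k l S \<longleftrightarrow> S \<subseteq> N \<and>
     real (card S) \<ge> real l * real (card N) / real k \<and>
     card (\<Inter>i\<in>S. A i) \<ge> l"

definition provides_EJR :: "'v set \<Rightarrow> ('v \<Rightarrow> 'c set) \<Rightarrow> nat \<Rightarrow> 'c set \<Rightarrow> bool" where
  "provides_EJR N A k W \<longleftrightarrow> card W = k \<and>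
     (\<forall>l \<in> {1..k}. \<forall>S. cohesive N A k l S \<longrightarrow> (\<exists>i\<in>S. card (A i \<inter> W) \<ge> l))"

definition dlevel :: "'v set \<Rightarrow> ('v \<Rightarrow> 'c set) \<Rightarrow> nat \<Rightarrow> 'c \<Rightarrow> 'c set \<Rightarrow> nat" where
  "dlevel N A k c W = Max {l::nat. int l =
      \<lfloor>real k / real (card N) * real (card {i \<in> N. c \<in> A i \<and> card (A i \<inter> W) < l})\<rfloor>}"

definition vlevel :: "'v set \<Rightarrow> ('v \<Rightarrow> 'c set) \<Rightarrow> nat \<Rightarrow> 'c set \<Rightarrow> 'v \<Rightarrow> 'c \<Rightarrow> nat" where
  "vlevel N A k W i c =
     (if A i - (W \<union> {c}) = {} then 0
      else Max ((\<lambda>c'. dlevel N A k c' W) ` (A i - (W \<union> {c}))))"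

definition gval :: "'v set \<Rightarrow> ('v \<Rightarrow> 'c set) \<Rightarrow> nat \<Rightarrow> 'c set \<Rightarrow> 'v \<Rightarrow> 'c \<Rightarrow> real" where
  "gval N A k W i c =
     (let L = vlevel N A k W i c; s = card (A i \<inter> W) in
      if L \<le> s then 0 else (real L - real s - 1) / real L)"

definition xval :: "'v set \<Rightarrow> ('v \<Rightarrow> 'c set) \<Rightarrow> nat \<Rightarrow> 'c set \<Rightarrow> ('v \<Rightarrow> real) \<Rightarrow> 'c \<Rightarrow> real" where
  "xval N A k W f c = (\<Sum>i\<in>supporters N A c. f i - gval N A k W i c)"

text \<open>A complete run of some member of the EJR-Exact family (any Alg1, Alg2, Alg3,
  any resolution of their choices).  ws = [w_1,...,w_t] are the candidates chosen in
  the normal iterations, f j is the budget vector f^j, W is the final output.\<close>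
definition EJR_Exact_run ::
  "'v set \<Rightarrow> 'c set \<Rightarrow> ('v \<Rightarrow> 'c set) \<Rightarrow> nat \<Rightarrow> 'c list \<Rightarrow> (nat \<Rightarrow> 'v \<Rightarrow> real) \<Rightarrow> 'c set \<Rightarrow> bool" where
  "EJR_Exact_run N C A k ws f W \<longleftrightarrow>
     (let q = real (card N) / real k; t = length ws; Ws = (\<lambda>j. set (take j ws)) in
      t \<le> k \<and>
      (\<forall>i\<in>N. f 0 i = 1) \<and>
      (\<forall>j<t. let w = ws ! j in
         w \<in> C - Ws j \<and>
         xval N A k (Ws j) (f j) w \<ge> q \<and>
         (\<forall>i\<in>N - supporters N A w. f (Suc j) i = f j i) \<and>
         (\<forall>i\<in>supporters N A w. 0 \<le> f (Suc j) i \<and> f (Suc j) i \<le> f j i) \<and>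
         (\<Sum>i\<in>supporters N A w. f j i - f (Suc j) i) = q \<and>
         (\<forall>i\<in>supporters N A w. vlevel N A k (Ws j) i w > card (A i \<inter> Ws j) \<longrightarrow>
              f (Suc j) i \<ge> gval N A k (Ws j) i w)) \<and>
      (t < k \<longrightarrow> (\<forall>c\<in>C - Ws t. xval N A k (Ws t) (f t) c < q)) \<and>
      set ws \<subseteq> W \<and> W \<subseteq> C \<and> card W = k)"

end

theory Submission
  imports Defs
begin

text \<open>
  Throughout Stage 1 every voter i keeps budget at least 1 - |A i \<inter> W_j| / l_j(c) for each
  unelected approved candidate c whose dissatisfaction level l_j(c) exceeds her satisfaction
  |A i \<inter> W_j|: levels only drop as W_j grows, and when a candidate she approves is elected,
  Alg2's lower bound f_i \<ge> g_i is exactly what restores the bound.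

  If an l-cohesive group were underrepresented, some commonly approved unelected candidate
  would have level at least l \<ge> 1 after Stage 1.  Take a candidate c of maximal level L:
  each of its at least L n / k unsatisfied supporters contributes at least 1 / L to x_c, so
  x_c \<ge> n / k = q.  This contradicts the stopping condition if Stage 1 ended early, and
  the exhaustion of all budget (k payments of q) otherwise.

  The level l(c, W) is the greatest fixed point of the monotone map
  l \<mapsto> \<lfloor>k / n * |{i. c \<in> A i, |A i \<inter> W| < l}|\<rfloor>, which yields the two inequalities
  characterising it.
\<close>

definition unsatisfied :: "'v set \<Rightarrow> ('v \<Rightarrow> 'c set) \<Rightarrow> 'c set \<Rightarrow> nat \<Rightarrow> 'c \<Rightarrow> 'v set" where
  "unsatisfied N A W l c = {i \<in> N. c \<in> A i \<and> card (A i \<inter> W) < l}"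

definition level_bound :: "'v set \<Rightarrow> ('v \<Rightarrow> 'c set) \<Rightarrow> nat \<Rightarrow> 'c set \<Rightarrow> 'c \<Rightarrow> nat \<Rightarrow> nat" where
  "level_bound N A k W c l =
     nat \<lfloor>real k / real (card N) * real (card (unsatisfied N A W l c))\<rfloor>"

lemma le_fixpoint_of_mono_bounded:
  fixes h :: "nat \<Rightarrow> nat"
  assumes "mono h" and "\<And>l. h l \<le> b" and "l \<le> h l"
  shows "\<exists>m. h m = m \<and> l \<le> m"
proof -
  define P where "P = {m. m \<le> h m}"
  have "P \<subseteq> {..b}"
    using assms(2) by (auto simp: P_def intro: le_trans)
  then have "finite P" by (rule finite_subset) simp
  have "l \<in> P" using assms(3) unfolding P_def by simp
  define m where "m = Max P"
  have "m \<in> P" and "l \<le> m"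
    unfolding m_def using \<open>finite P\<close> \<open>l \<in> P\<close> by (auto intro: Max_in Max_ge)
  then have "h m \<in> P" using \<open>mono h\<close> by (simp add: P_def monoD)
  then have "h m \<le> m" unfolding m_def using \<open>finite P\<close> by simp
  with \<open>m \<in> P\<close> have "h m = m" by (simp add: P_def)
  with \<open>l \<le> m\<close> show ?thesis by blast
qed

lemma dlevel_eq_Max_fixpoints:
  "dlevel N A k c W = Max {l. level_bound N A k W c l = l}"
proof -
  have "int l = \<lfloor>x\<rfloor> \<longleftrightarrow> nat \<lfloor>x\<rfloor> = l" if "0 \<le> x" for l and x :: real
    using that by linarith
  then have "{l. int l = \<lfloor>real k / real (card N) * real (card (unsatisfied N A W l c))\<rfloor>}
      = {l. level_bound N A k W c l = l}"
    unfolding level_bound_def by simp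
  then show ?thesis unfolding dlevel_def unsatisfied_def by simp
qed

lemma card_unsatisfied_le:
  "finite N \<Longrightarrow> card (unsatisfied N A W l c) \<le> card N"
  unfolding unsatisfied_def by (intro card_mono) auto

lemma unsatisfied_mono_level:
  "l \<le> l' \<Longrightarrow> unsatisfied N A W l c \<subseteq> unsatisfied N A W l' c"
  unfolding unsatisfied_def by auto

lemma unsatisfied_antimono_committee:
  assumes "W \<subseteq> W'" and "finite W'"
  shows "unsatisfied N A W' l c \<subseteq> unsatisfied N A W l c"
proof
  fix i assume "i \<in> unsatisfied N A W' l c"
  moreover have "card (A i \<inter> W) \<le> card (A i \<inter> W')"
    using assms by (intro card_mono) auto
  ultimately show "i \<in> unsatisfied N A W l c"
    unfolding unsatisfied_def by auto
qed

lemma level_bound_le: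
  assumes "finite N"
  shows "level_bound N A k W c l \<le> k"
proof (cases "card N = 0")
  case False
  have "real k / real (card N) * real (card (unsatisfied N A W l c))
      \<le> real k / real (card N) * real (card N)"
    using card_unsatisfied_le[OF assms] by (intro mult_left_mono) auto
  also have "\<dots> = real k" using False by simp
  finally show ?thesis unfolding level_bound_def by linarith
qed (simp add: level_bound_def)

lemma level_bound_le_if_unsatisfied_subset:
  assumes "finite N" and "unsatisfied N A W l c \<subseteq> unsatisfied N A W' l' c"
  shows "level_bound N A k W c l \<le> level_bound N A k W' c l'"
proof -
  have "card (unsatisfied N A W l c) \<le> card (unsatisfied N A W' l' c)"
    using assms by (intro card_mono) (auto simp: unsatisfied_def)
  then show ?thesis
    unfolding level_bound_def by (intro nat_mono floor_mono mult_left_mono) auto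
qed

lemma mono_level_bound:
  "finite N \<Longrightarrow> mono (level_bound N A k W c)"
  by (intro monoI level_bound_le_if_unsatisfied_subset unsatisfied_mono_level)

lemma finite_level_bound_fixpoints:
  assumes "finite N"
  shows "finite {l. level_bound N A k W c l = l}"
proof (rule finite_subset)
  show "{l. level_bound N A k W c l = l} \<subseteq> {..k}"
  proof
    fix l assume "l \<in> {l. level_bound N A k W c l = l}"
    then have "l = level_bound N A k W c l" by simp
    also have "\<dots> \<le> k" by (rule level_bound_le[OF assms])
    finally show "l \<in> {..k}" by simp
  qed
qed simp

lemma dlevel_fixpoint:
  assumes "finite N"
  shows "level_bound N A k W c (dlevel N A k c W) = dlevel N A k c W"
proof -
  have "level_bound N A k W c 0 = 0"
    by (simp add: level_bound_def unsatisfied_def)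
  then have "Max {l. level_bound N A k W c l = l} \<in> {l. level_bound N A k W c l = l}"
    using finite_level_bound_fixpoints[OF assms] by (intro Max_in) auto
  then show ?thesis unfolding dlevel_eq_Max_fixpoints by simp
qed

lemma le_dlevel:
  assumes "finite N" and "l \<le> level_bound N A k W c l"
  shows "l \<le> dlevel N A k c W"
proof -
  obtain m where m: "level_bound N A k W c m = m" and "l \<le> m"
    using le_fixpoint_of_mono_bounded[where h = "level_bound N A k W c",
        OF mono_level_bound[OF assms(1)] level_bound_le[OF assms(1)] assms(2)]
    by blast
  have "m \<le> Max {l. level_bound N A k W c l = l}"
    by (rule Max_ge[OF finite_level_bound_fixpoints[OF assms(1)]]) (simp add: m)
  with \<open>l \<le> m\<close> show ?thesis unfolding dlevel_eq_Max_fixpoints by simp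
qed

lemma dlevel_antimono:
  assumes "finite N" and "W \<subseteq> W'" and "finite W'"
  shows "dlevel N A k c W' \<le> dlevel N A k c W"
proof (rule le_dlevel[OF assms(1)])
  have "dlevel N A k c W' = level_bound N A k W' c (dlevel N A k c W')"
    using dlevel_fixpoint[OF assms(1), of A k W' c] by simp
  also have "\<dots> \<le> level_bound N A k W c (dlevel N A k c W')"
    using assms by (intro level_bound_le_if_unsatisfied_subset unsatisfied_antimono_committee)
  finally show "dlevel N A k c W' \<le> level_bound N A k W c (dlevel N A k c W')" .
qed

lemma dlevel_le_card_unsatisfied:
  assumes "finite N" and "N \<noteq> {}"
  shows "real (dlevel N A k c W) * real (card N)
           \<le> real k * real (card (unsatisfied N A W (dlevel N A k c W) c))"
proof -
  define L where "L = dlevel N A k c W"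
  have "real L = real (nat \<lfloor>real k / real (card N) * real (card (unsatisfied N A W L c))\<rfloor>)"
    using dlevel_fixpoint[OF assms(1), of A k W c] unfolding L_def level_bound_def by simp
  also have "\<dots> \<le> real k / real (card N) * real (card (unsatisfied N A W L c))"
    by (rule of_nat_floor) simp
  finally show ?thesis unfolding L_def[symmetric] using assms by (simp add: field_simps card_gt_0_iff)
qed

lemma le_dlevel_if_card_unsatisfied:
  assumes "finite N" and "N \<noteq> {}"
    and "real l * real (card N) \<le> real k * real (card (unsatisfied N A W l c))"
  shows "l \<le> dlevel N A k c W"
proof (rule le_dlevel[OF assms(1)])
  have "real l \<le> real k / real (card N) * real (card (unsatisfied N A W l c))"
    using assms by (simp add: field_simps card_gt_0_iff)
  then show "l \<le> level_bound N A k W c l" unfolding level_bound_def by linarith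
qed

definition sufficient_budget :: "'v set \<Rightarrow> ('v \<Rightarrow> 'c set) \<Rightarrow> nat \<Rightarrow> 'c set \<Rightarrow> 'v \<Rightarrow> real \<Rightarrow> bool" where
  "sufficient_budget N A k W i b \<longleftrightarrow>
     (\<forall>c \<in> A i - W. card (A i \<inter> W) < dlevel N A k c W \<longrightarrow>
        1 - real (card (A i \<inter> W)) / real (dlevel N A k c W) \<le> b)"

lemma sufficient_budget_empty: "sufficient_budget N A k {} i 1"
  unfolding sufficient_budget_def by simp

lemma sufficient_budget_insert_unapproved:
  assumes "finite N" and "finite W" and "w \<notin> A i"
    and "sufficient_budget N A k W i b"
  shows "sufficient_budget N A k (insert w W) i b"
  unfolding sufficient_budget_def
proof (intro ballI impI)
  fix c assume c: "c \<in> A i - insert w W"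
  define s where "s = card (A i \<inter> W)"
  define L where "L = dlevel N A k c W"
  define L' where "L' = dlevel N A k c (insert w W)"
  have s: "card (A i \<inter> insert w W) = s" using assms(3) by (simp add: s_def)
  have "L' \<le> L" unfolding L_def L'_def using assms by (intro dlevel_antimono) auto
  assume "card (A i \<inter> insert w W) < L'"
  then have "s < L'" using s by simp
  then have "1 - real s / real L \<le> b"
    using assms(4) c \<open>L' \<le> L\<close> unfolding sufficient_budget_def s_def L_def by auto
  moreover have "real s / real L \<le> real s / real L'"
    using \<open>L' \<le> L\<close> \<open>s < L'\<close> by (intro divide_left_mono) auto
  ultimately show "1 - real (card (A i \<inter> insert w W)) / real L' \<le> b"
    using s by (simp add: add.commute)
qed

lemma dlevel_le_vlevel:
  assumes "finite (A i)" and "c' \<in> A i - (W \<union> {c})"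
  shows "dlevel N A k c' W \<le> vlevel N A k W i c"
  using assms unfolding vlevel_def by (auto intro!: Max_ge)

lemma gval_if_less_vlevel:
  assumes "card (A i \<inter> W) < vlevel N A k W i c"
  shows "gval N A k W i c
           = 1 - (real (card (A i \<inter> W)) + 1) / real (vlevel N A k W i c)"
  using assms unfolding gval_def Let_def by (simp add: field_simps)

lemma sufficient_budget_insert_approved:
  assumes "finite N" and "finite W" and "finite (A i)" and "w \<in> A i" and "w \<notin> W"
    and "card (A i \<inter> W) < vlevel N A k W i w \<Longrightarrow> gval N A k W i w \<le> b"
  shows "sufficient_budget N A k (insert w W) i b"
  unfolding sufficient_budget_def
proof (intro ballI impI)
  fix c assume c: "c \<in> A i - insert w W"
  define s where "s = card (A i \<inter> W)"
  define L' where "L' = dlevel N A k c (insert w W)"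
  define M where "M = vlevel N A k W i w"
  have s: "card (A i \<inter> insert w W) = s + 1"
    using assms(2,4,5) by (simp add: s_def)
  have "L' \<le> dlevel N A k c W"
    unfolding L'_def using assms(1,2) by (intro dlevel_antimono) auto
  also have "\<dots> \<le> M"
    unfolding M_def using assms(3) c by (intro dlevel_le_vlevel) auto
  finally have "L' \<le> M" .
  assume "card (A i \<inter> insert w W) < L'"
  then have "s + 1 < L'" using s by simp
  then have "1 - (real s + 1) / real M \<le> b"
    using assms(6) gval_if_less_vlevel[of A i W N k w] \<open>L' \<le> M\<close> unfolding s_def M_def by simp
  moreover have "(real s + 1) / real M \<le> (real s + 1) / real L'"
    using \<open>L' \<le> M\<close> \<open>s + 1 < L'\<close> by (intro divide_left_mono) auto
  ultimately show "1 - real (card (A i \<inter> insert w W)) / real L' \<le> b"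
    using s by (simp add: add.commute)
qed

lemma inverse_vlevel_le_budget_minus_gval:
  assumes "finite (A i)" and "card (A i \<inter> W) < vlevel N A k W i c"
    and "sufficient_budget N A k W i b"
  shows "1 / real (vlevel N A k W i c) \<le> b - gval N A k W i c"
proof -
  define s where "s = card (A i \<inter> W)"
  define M where "M = vlevel N A k W i c"
  have "A i - (W \<union> {c}) \<noteq> {}" using assms(2) unfolding vlevel_def by auto
  then have "M \<in> (\<lambda>c'. dlevel N A k c' W) ` (A i - (W \<union> {c}))"
    unfolding M_def vlevel_def using assms(1) by (simp add: Max_in)
  then obtain c' where c': "c' \<in> A i - (W \<union> {c})" and "M = dlevel N A k c' W"
    by blast
  then have "1 - real s / real M \<le> b"
    using assms(2,3) unfolding sufficient_budget_def s_def M_def by auto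
  moreover have "gval N A k W i c = 1 - (real s + 1) / real M"
    using gval_if_less_vlevel[OF assms(2)] unfolding s_def M_def .
  moreover have "(real s + 1) / real M = real s / real M + 1 / real M"
    by (rule add_divide_distrib)
  ultimately show ?thesis unfolding M_def[symmetric] by linarith
qed

lemma vlevel_le:
  assumes "finite (A i)" and "\<And>c'. c' \<in> A i - (W \<union> {c}) \<Longrightarrow> dlevel N A k c' W \<le> L"
  shows "vlevel N A k W i c \<le> L"
  using assms unfolding vlevel_def by simp

lemma supporter_share_lower_bound:
  assumes "finite (A i)" and "A i \<subseteq> C" and "cs \<in> A i - W"
    and cs_max: "\<And>c. c \<in> C - W \<Longrightarrow> dlevel N A k c W \<le> dlevel N A k cs W"
    and "0 \<le> b" and "sufficient_budget N A k W i b"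
  shows "0 \<le> b - gval N A k W i cs"
    and "card (A i \<inter> W) < dlevel N A k cs W \<Longrightarrow>
           1 / real (dlevel N A k cs W) \<le> b - gval N A k W i cs"
proof -
  define s where "s = card (A i \<inter> W)"
  define L where "L = dlevel N A k cs W"
  define M where "M = vlevel N A k W i cs"
  have "0 \<le> b - gval N A k W i cs \<and> (s < L \<longrightarrow> 1 / real L \<le> b - gval N A k W i cs)"
  proof (cases "s < M")
    case True
    have "M \<le> L" unfolding M_def L_def using assms(1,2) by (intro vlevel_le cs_max) auto
    moreover have "1 / real M \<le> b - gval N A k W i cs"
      unfolding M_def using assms(1,6) True by (intro inverse_vlevel_le_budget_minus_gval) (simp_all add: s_def M_def)
    moreover have "0 < M" using True by simp
    ultimately have "1 / real L \<le> 1 / real M" and "0 < 1 / real M"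
      by (simp_all add: frac_le)
    with \<open>1 / real M \<le> b - gval N A k W i cs\<close> show ?thesis by linarith
  next
    case False
    then have "gval N A k W i cs = 0" unfolding gval_def Let_def s_def M_def by simp
    moreover have "1 / real L \<le> b" if "s < L"
    proof -
      have "1 - real s / real L \<le> b"
        using assms(3,6) that unfolding sufficient_budget_def s_def L_def by blast
      moreover have "1 / real L \<le> 1 - real s / real L" using that by (simp add: field_simps)
      ultimately show ?thesis by linarith
    qed
    ultimately show ?thesis using assms(5) by simp
  qed
  then show "0 \<le> b - gval N A k W i cs"
    and "card (A i \<inter> W) < dlevel N A k cs W \<Longrightarrow> 1 / real (dlevel N A k cs W) \<le> b - gval N A k W i cs"
    unfolding s_def L_def by auto
qed

lemma quota_le_xval_of_max_level:
  assumes "finite N" and "N \<noteq> {}" and "0 < k" and "finite C" and "\<forall>i\<in>N. A i \<subseteq> C"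
    and budget: "\<forall>i\<in>N. 0 \<le> b i \<and> sufficient_budget N A k W i (b i)"
    and "cs \<in> C - W"
    and cs_max: "\<And>c. c \<in> C - W \<Longrightarrow> dlevel N A k c W \<le> dlevel N A k cs W"
    and "1 \<le> dlevel N A k cs W"
  shows "real (card N) / real k \<le> xval N A k W b cs"
proof -
  define L where "L = dlevel N A k cs W"
  define T where "T = unsatisfied N A W L cs"
  have share: "0 \<le> b i - gval N A k W i cs"
      "card (A i \<inter> W) < L \<Longrightarrow> 1 / real L \<le> b i - gval N A k W i cs"
    if "i \<in> supporters N A cs" for i
  proof -
    have "i \<in> N" and "cs \<in> A i" using that unfolding supporters_def by auto
    then have "A i \<subseteq> C" and "finite (A i)" and "cs \<in> A i - W"
      using assms(4,5,7) by (auto intro: finite_subset)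
    moreover have "0 \<le> b i" and "sufficient_budget N A k W i (b i)" using budget \<open>i \<in> N\<close> by auto
    ultimately show "0 \<le> b i - gval N A k W i cs"
        "card (A i \<inter> W) < L \<Longrightarrow> 1 / real L \<le> b i - gval N A k W i cs"
      unfolding L_def using supporter_share_lower_bound[OF _ _ _ cs_max] by blast+
  qed
  have "T \<subseteq> supporters N A cs" unfolding T_def unsatisfied_def supporters_def by auto
  have "real (card T) / real L = (\<Sum>i\<in>T. 1 / real L)" by simp
  also have "\<dots> \<le> (\<Sum>i\<in>T. b i - gval N A k W i cs)"
    using share(2) \<open>T \<subseteq> supporters N A cs\<close> by (intro sum_mono) (auto simp: T_def unsatisfied_def)
  also have "\<dots> \<le> xval N A k W b cs"
    unfolding xval_def using share(1) \<open>T \<subseteq> supporters N A cs\<close> assms(1)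
    by (intro sum_mono2) (auto simp: supporters_def)
  finally have "real (card T) / real L \<le> xval N A k W b cs" .
  moreover have "real L * real (card N) \<le> real k * real (card T)"
    unfolding L_def T_def using assms(1,2) by (rule dlevel_le_card_unsatisfied)
  then have "real (card N) / real k \<le> real (card T) / real L"
    using assms(3,9) unfolding L_def by (simp add: field_simps)
  ultimately show ?thesis by linarith
qed

lemma xval_le_sum_budgets:
  assumes "finite N" and "\<forall>i\<in>N. 0 \<le> b i"
  shows "xval N A k W b c \<le> (\<Sum>i\<in>N. b i)"
proof -
  have "xval N A k W b c \<le> (\<Sum>i\<in>supporters N A c. b i)"
    unfolding xval_def gval_def Let_def by (intro sum_mono) auto
  also have "\<dots> \<le> (\<Sum>i\<in>N. b i)"
    using assms by (intro sum_mono2) (auto simp: supporters_def)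
  finally show ?thesis .
qed

lemma cohesive_group_has_candidate_of_level:
  assumes "finite N" and "N \<noteq> {}" and "0 < k" and "finite C" and "\<forall>i\<in>N. A i \<subseteq> C"
    and "cohesive N A k l S" and "1 \<le> l" and "\<forall>i\<in>S. card (A i \<inter> W) < l"
    and "finite W" and "W' \<subseteq> W"
  obtains c where "c \<in> C - W" and "l \<le> dlevel N A k c W'"
proof -
  define I where "I = (\<Inter>i\<in>S. A i)"
  have "S \<subseteq> N" and card_S: "real l * real (card N) / real k \<le> real (card S)" and "l \<le> card I"
    using assms(6) unfolding cohesive_def I_def by auto
  have "0 < real l * real (card N) / real k"
    using assms(1,2,3,7) by (simp add: card_gt_0_iff)
  then obtain i0 where "i0 \<in> S" using card_S by fastforce
  then have "I \<subseteq> A i0" and "A i0 \<subseteq> C" using \<open>S \<subseteq> N\<close> assms(5) unfolding I_def by auto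
  then have "card (I \<inter> W) \<le> card (A i0 \<inter> W)" using assms(9) by (intro card_mono) auto
  also have "\<dots> < card I" using assms(8) \<open>i0 \<in> S\<close> \<open>l \<le> card I\<close> by fastforce
  finally have "\<not> I \<subseteq> W" by (metis Int_absorb2 less_irrefl)
  then obtain c where "c \<in> I" and "c \<notin> W" by blast
  have "S \<subseteq> unsatisfied N A W' l c"
  proof
    fix i assume "i \<in> S"
    have "card (A i \<inter> W') \<le> card (A i \<inter> W)" using assms(9,10) by (intro card_mono) auto
    then show "i \<in> unsatisfied N A W' l c"
      using \<open>i \<in> S\<close> \<open>S \<subseteq> N\<close> \<open>c \<in> I\<close> assms(8) unfolding I_def unsatisfied_def by fastforce
  qed
  then have "card S \<le> card (unsatisfied N A W' l c)"
    using assms(1) by (intro card_mono) (auto simp: unsatisfied_def)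
  then have "real k * real (card S) \<le> real k * real (card (unsatisfied N A W' l c))"
    by (intro mult_left_mono) auto
  moreover have "real l * real (card N) \<le> real k * real (card S)"
    using card_S assms(3) by (simp add: field_simps)
  ultimately have "real l * real (card N) \<le> real k * real (card (unsatisfied N A W' l c))"
    by linarith
  with assms(1,2) have "l \<le> dlevel N A k c W'" by (rule le_dlevel_if_card_unsatisfied)
  moreover have "c \<in> C - W" using \<open>c \<in> I\<close> \<open>c \<notin> W\<close> \<open>I \<subseteq> A i0\<close> \<open>A i0 \<subseteq> C\<close> by blast
  ultimately show ?thesis by (rule that[rotated])
qed

locale EJR_Exact_execution =
  fixes N :: "'v set" and C :: "'c set" and A :: "'v \<Rightarrow> 'c set" and k :: nat
    and ws :: "'c list" and f :: "nat \<Rightarrow> 'v \<Rightarrow> real" and W :: "'c set"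
  assumes finite_voters: "finite N" and voters_nonempty: "N \<noteq> {}"
    and finite_candidates: "finite C" and ballots_subset: "\<forall>i\<in>N. A i \<subseteq> C"
    and committee_size_pos: "0 < k"
    and run: "EJR_Exact_run N C A k ws f W"
begin

abbreviation quota :: real where
  "quota \<equiv> real (card N) / real k"

abbreviation selected :: "nat \<Rightarrow> 'c set" where
  "selected j \<equiv> set (take j ws)"

lemma length_le: "length ws \<le> k"
  and initial_budget: "i \<in> N \<Longrightarrow> f 0 i = 1"
  and output_props: "set ws \<subseteq> W" "W \<subseteq> C" "card W = k"
  and stopping: "length ws < k \<Longrightarrow> c \<in> C - set ws \<Longrightarrow> xval N A k (set ws) (f (length ws)) c < quota"
  using run unfolding EJR_Exact_run_def Let_def by auto

context
  fixes j assumes j: "j < length ws"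
begin

lemma selected_candidate: "ws ! j \<in> C - selected j"
  and unchanged_budget: "i \<in> N - supporters N A (ws ! j) \<Longrightarrow> f (Suc j) i = f j i"
  and payment_bounds: "i \<in> supporters N A (ws ! j) \<Longrightarrow> 0 \<le> f (Suc j) i \<and> f (Suc j) i \<le> f j i"
  and total_payment: "(\<Sum>i\<in>supporters N A (ws ! j). f j i - f (Suc j) i) = quota"
  and payment_respects_gval: "i \<in> supporters N A (ws ! j) \<Longrightarrow>
      card (A i \<inter> selected j) < vlevel N A k (selected j) i (ws ! j) \<Longrightarrow>
      gval N A k (selected j) i (ws ! j) \<le> f (Suc j) i"
  using run j unfolding EJR_Exact_run_def Let_def by auto

lemma selected_Suc: "selected (Suc j) = insert (ws ! j) (selected j)"
  using j by (simp add: take_Suc_conv_app_nth)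

end

lemma budget_nonneg: "j \<le> length ws \<Longrightarrow> i \<in> N \<Longrightarrow> 0 \<le> f j i"
proof (induction j)
  case (Suc j)
  then show ?case using unchanged_budget[of j i] payment_bounds[of j i] by fastforce
qed (simp add: initial_budget)

lemma budget_sufficient:
  "j \<le> length ws \<Longrightarrow> i \<in> N \<Longrightarrow> sufficient_budget N A k (selected j) i (f j i)"
proof (induction j)
  case 0
  then show ?case using sufficient_budget_empty by (simp add: initial_budget)
next
  case (Suc j)
  then have j: "j < length ws" by simp
  have "finite (A i)" using Suc.prems finite_candidates ballots_subset by (auto intro: finite_subset)
  show ?case
  proof (cases "ws ! j \<in> A i")
    case True
    then have "i \<in> supporters N A (ws ! j)" using Suc.prems by (simp add: supporters_def)
    with j True \<open>finite (A i)\<close> show ?thesis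
      unfolding selected_Suc[OF j] using selected_candidate[OF j] finite_voters
      by (intro sufficient_budget_insert_approved payment_respects_gval) auto
  next
    case False
    then have "f (Suc j) i = f j i" using Suc.prems unchanged_budget[OF j] by (simp add: supporters_def)
    with False Suc show ?thesis
      unfolding selected_Suc[OF j] using finite_voters
      by (intro sufficient_budget_insert_unapproved) auto
  qed
qed

lemma budget_sum: "j \<le> length ws \<Longrightarrow> (\<Sum>i\<in>N. f j i) = real (card N) - real j * quota"
proof (induction j)
  case 0
  then show ?case by (simp add: initial_budget)
next
  case (Suc j)
  then have j: "j < length ws" by simp
  have "(\<Sum>i\<in>N. f j i - f (Suc j) i) = (\<Sum>i\<in>supporters N A (ws ! j). f j i - f (Suc j) i)"
    using finite_voters unchanged_budget[OF j]
    by (intro sum.mono_neutral_right) (auto simp: supporters_def)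
  then have "(\<Sum>i\<in>N. f j i) - (\<Sum>i\<in>N. f (Suc j) i) = quota"
    using total_payment[OF j] by (simp add: sum_subtractf)
  moreover have "real (Suc j) * quota = real j * quota + quota"
    by (simp only: of_nat_Suc ring_distribs mult_1_left add.commute)
  ultimately show ?case using Suc by linarith
qed

lemma quota_pos: "0 < quota"
  using finite_voters voters_nonempty committee_size_pos by (simp add: card_gt_0_iff)

lemma xval_below_quota_after_stage1:
  assumes "c \<in> C - set ws"
  shows "xval N A k (set ws) (f (length ws)) c < quota"
proof (cases "length ws < k")
  case True
  then show ?thesis using stopping assms by blast
next
  case False
  then have "length ws = k" using length_le by simp
  have "xval N A k (set ws) (f (length ws)) c \<le> (\<Sum>i\<in>N. f (length ws) i)"
    using budget_nonneg[of "length ws"] by (intro xval_le_sum_budgets[OF finite_voters]) simp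
  also have "\<dots> = 0"
    using budget_sum[of "length ws"] \<open>length ws = k\<close> committee_size_pos by simp
  finally show ?thesis using quota_pos by linarith
qed

lemma quota_le_xval_if_underrepresented:
  assumes "cohesive N A k l S" and "1 \<le> l" and "\<forall>i\<in>S. card (A i \<inter> W) < l"
  obtains cs where "cs \<in> C - set ws" and "quota \<le> xval N A k (set ws) (f (length ws)) cs"
proof -
  let ?level = "\<lambda>c. dlevel N A k c (set ws)"
  have "finite W" using output_props(2) finite_candidates by (rule finite_subset)
  then obtain c where "c \<in> C - W" and "l \<le> ?level c"
    using cohesive_group_has_candidate_of_level[OF finite_voters voters_nonempty
        committee_size_pos finite_candidates ballots_subset assms _ output_props(1)]
    by blast
  then have "c \<in> C - set ws" using output_props(1) by auto
  then obtain cs where cs: "cs \<in> C - set ws" and "Max (?level ` (C - set ws)) = ?level cs"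
    using obtains_MAX[of "C - set ws"] finite_candidates by blast
  then have cs_max: "?level c' \<le> ?level cs" if "c' \<in> C - set ws" for c'
    using that finite_candidates by (metis Max_ge finite_Diff finite_imageI imageI)
  have "1 \<le> ?level cs"
    using cs_max[OF \<open>c \<in> C - set ws\<close>] \<open>l \<le> ?level c\<close> assms(2) by simp
  moreover have "\<forall>i\<in>N. 0 \<le> f (length ws) i \<and> sufficient_budget N A k (set ws) i (f (length ws) i)"
    using budget_nonneg[of "length ws"] budget_sufficient[of "length ws"] by simp
  ultimately have "quota \<le> xval N A k (set ws) (f (length ws)) cs"
    using quota_le_xval_of_max_level[OF finite_voters voters_nonempty committee_size_pos
        finite_candidates ballots_subset _ cs cs_max] by blast
  with cs show ?thesis by (rule that)
qed

lemma provides_EJR: "provides_EJR N A k W"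
  unfolding provides_EJR_def
proof (intro conjI ballI allI impI)
  show "card W = k" by (fact output_props(3))
  fix l S assume "l \<in> {1..k}" and "cohesive N A k l S"
  show "\<exists>i\<in>S. l \<le> card (A i \<inter> W)"
  proof (rule ccontr)
    assume "\<not> (\<exists>i\<in>S. l \<le> card (A i \<inter> W))"
    then have "\<forall>i\<in>S. card (A i \<inter> W) < l" by auto
    moreover have "1 \<le> l" using \<open>l \<in> {1..k}\<close> by simp
    ultimately obtain cs where cs: "cs \<in> C - set ws"
      and "quota \<le> xval N A k (set ws) (f (length ws)) cs"
      using quota_le_xval_if_underrepresented[OF \<open>cohesive N A k l S\<close>] by blast
    then show False using xval_below_quota_after_stage1[OF cs] by linarith
  qed
qed

end

theorem mainTheorem7:
  fixes N :: "'v set" and C :: "'c set" and A :: "'v \<Rightarrow> 'c set" and k :: nat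
    and ws :: "'c list" and f :: "nat \<Rightarrow> 'v \<Rightarrow> real" and W :: "'c set"
  assumes "finite N" and "N \<noteq> {}" and "finite C"
    and "\<forall>i\<in>N. A i \<subseteq> C"
    and "0 < k" and "k \<le> card C"
    and "EJR_Exact_run N C A k ws f W"
  shows "provides_EJR N A k W"
proof -
  interpret EJR_Exact_execution N C A k ws f W
    using assms by unfold_locales
  show ?thesis by (rule provides_EJR)
qed

end
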